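(* Let $\mathcal N$ be a network with parties $A_1,\dots,A_n$ all of whose sources are bipartite. Let $M$ be an $n\times n$ complex positive semidefinite matrix such that $M_{ij}=0$ whenever $i\neq j$ and $A_i,A_j$ share no source. Then $M$ admits an $\mathcal N$-compatible matrix decomposition if and only if its comparison matrix $\widehat M$ is positive semidefinite.
   Context: A network $\mathcal N$ is a bipartite graph between sources $S_\alpha$ and parties $A_i$ ($i=1,\dots,n$); $\alpha\to i$ means $S_\alpha$ is adjacent to $A_i$; no isolated vertices, and no two sources with comparable sets of adjacent parties. Here every source is adjacent to exactly two parties. $\mathcal N$-compatible matrix decomposition: for each source $\alpha$, let $\mathcal L_\alpha$ be the set of $n\times n$ complex positive semidefinite matrices $M_\alpha$ with $(M_\alpha)_{ij}\neq 0$ only if $\alpha\to i$ and $\alpha\to j$. A positive semidefinite $n\times n$ matrix $M$ admits an $\mathcal N$-compatible matrix decomposition if $M=\sum_\alpha M_\alpha$ with $M_\alpha\in\mathcal L_\alpha$ for all $\alpha$. The comparison matrix $\widehat M$ of $M$ is defined by $\widehat M_{ii}=M_{ii}$ and $\widehat M_{ij}=-|M_{ij}|$ for $i\neq j$. *)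

theory Defs
  imports "HOL-Analysis.Analysis"
begin

text \<open>n x n complex matrices are represented as functions nat => nat => complex,
  only the entries with indices < n being relevant. Parties are 0..n-1.\<close>

definition psd :: "nat \<Rightarrow> (nat \<Rightarrow> nat \<Rightarrow> complex) \<Rightarrow> bool" where
  "psd n M \<longleftrightarrow> (\<forall>x :: nat \<Rightarrow> complex.
      let q = (\<Sum>i<n. \<Sum>j<n. cnj (x i) * M i j * x j) in Im q = 0 \<and> Re q \<ge> 0)"

text \<open>A network: parties 0..n-1, finite set of sources Src, adj a = parties adjacent to source a.\<close>
definition network :: "nat \<Rightarrow> 's set \<Rightarrow> ('s \<Rightarrow> nat set) \<Rightarrow> bool" where
  "network n Src adj \<longleftrightarrow> finite Src
     \<and> (\<forall>a\<in>Src. adj a \<subseteq> {..<n} \<and> adj a \<noteq> {})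
     \<and> (\<forall>i<n. \<exists>a\<in>Src. i \<in> adj a)
     \<and> (\<forall>a\<in>Src. \<forall>b\<in>Src. a \<noteq> b \<longrightarrow> \<not> adj a \<subseteq> adj b)"

definition bipartite_sources :: "'s set \<Rightarrow> ('s \<Rightarrow> nat set) \<Rightarrow> bool" where
  "bipartite_sources Src adj \<longleftrightarrow> (\<forall>a\<in>Src. card (adj a) = 2)"

definition local_matrices :: "nat \<Rightarrow> nat set \<Rightarrow> (nat \<Rightarrow> nat \<Rightarrow> complex) set" where
  "local_matrices n A = {Ma. psd n Ma \<and> (\<forall>i<n. \<forall>j<n. Ma i j \<noteq> 0 \<longrightarrow> i \<in> A \<and> j \<in> A)}"

definition has_network_decomposition ::
    "nat \<Rightarrow> 's set \<Rightarrow> ('s \<Rightarrow> nat set) \<Rightarrow> (nat \<Rightarrow> nat \<Rightarrow> complex) \<Rightarrow> bool" where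
  "has_network_decomposition n Src adj M \<longleftrightarrow>
     (\<exists>Ms :: 's \<Rightarrow> nat \<Rightarrow> nat \<Rightarrow> complex.
        (\<forall>a\<in>Src. Ms a \<in> local_matrices n (adj a))
      \<and> (\<forall>i<n. \<forall>j<n. M i j = (\<Sum>a\<in>Src. Ms a i j)))"

definition comparison_matrix :: "(nat \<Rightarrow> nat \<Rightarrow> complex) \<Rightarrow> nat \<Rightarrow> nat \<Rightarrow> complex" where
  "comparison_matrix M = (\<lambda>i j. if i = j then M i i else - complex_of_real (cmod (M i j)))"

end

theory Submission
  imports Defs
begin

text \<open>Write A for the real part of the comparison matrix. It is a symmetric Z-matrix with
  nonnegative quadratic form, and eliminating one party at a time by Schur complements yields
  a vector v > 0 with A v \<ge> 0. Scaling row i by 1/v i turns this into a diagonal budget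
  for party i that covers the weights g i t = |M i t| v t / v i of its neighbours, with
  g i t g t i = |M i t|^2. Each source a = {i, j} then receives the 2 x 2 block with
  off-diagonal entry M i j and diagonals at least g i j and g j i, hence positive semidefinite,
  and the leftover budget is spread evenly over the sources of each party. Conversely, taking
  comparison matrices commutes with such a sum because each off-diagonal entry comes from a
  single source, and the comparison matrix of a positive semidefinite 2 x 2 block is again
  positive semidefinite.\<close>

lemma sum_sum_supported:
  fixes f :: "nat \<Rightarrow> nat \<Rightarrow> 'a::comm_monoid_add"
  assumes "T \<subseteq> {..<n}" and "\<And>k l. k < n \<Longrightarrow> l < n \<Longrightarrow> f k l \<noteq> 0 \<Longrightarrow> k \<in> T \<and> l \<in> T"
  shows "(\<Sum>k<n. \<Sum>l<n. f k l) = (\<Sum>k\<in>T. \<Sum>l\<in>T. f k l)"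
proof -
  have "(\<Sum>k<n. \<Sum>l<n. f k l) = (\<Sum>k<n. \<Sum>l\<in>T. f k l)"
    by (intro sum.cong refl sum.mono_neutral_right) (use assms in auto)
  also have "\<dots> = (\<Sum>k\<in>T. \<Sum>l\<in>T. f k l)"
    by (intro sum.mono_neutral_right) (use assms in \<open>auto intro!: sum.neutral\<close>)
  finally show ?thesis .
qed

lemma quadratic_nonneg_imp_discriminant_le:
  fixes a b c :: real
  assumes "a \<ge> 0" and nonneg: "\<And>t. 0 \<le> a * t\<^sup>2 + 2 * b * t + c"
  shows "b\<^sup>2 \<le> a * c"
proof (cases "a = 0")
  case True
  have "b = 0"
  proof (rule ccontr)
    assume "b \<noteq> 0"
    then show False using nonneg[of "- (c + 1) / (2 * b)"] True by (simp add: field_simps)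
  qed
  then show ?thesis using True by simp
next
  case False
  then have "a > 0" using assms(1) by simp
  have "0 \<le> a * (- b / a)\<^sup>2 + 2 * b * (- b / a) + c" by (rule nonneg)
  also have "\<dots> = (a * c - b\<^sup>2) / a" using \<open>a > 0\<close> by (simp add: field_simps power2_eq_square)
  finally show ?thesis using \<open>a > 0\<close> by (simp add: zero_le_divide_iff)
qed

lemma cross_term_le_of_square_le:
  fixes p q c a b :: real
  assumes "p \<ge> 0" "q \<ge> 0" "c \<ge> 0" "c\<^sup>2 \<le> p * q"
  shows "2 * c * a * b \<le> p * a\<^sup>2 + q * b\<^sup>2"
proof (cases "p = 0")
  case True
  then have "c\<^sup>2 \<le> 0" using assms by simp
  then have "c = 0" by simp
  then show ?thesis using True assms by simp
next
  case False
  then have "p > 0" using assms by simp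
  have "p * (p * a\<^sup>2 + q * b\<^sup>2 - 2 * c * a * b) = (p * a - c * b)\<^sup>2 + (p * q - c\<^sup>2) * b\<^sup>2"
    by (simp add: power2_eq_square algebra_simps)
  also have "\<dots> \<ge> 0" using assms by simp
  finally show ?thesis using \<open>p > 0\<close> by (simp add: zero_le_mult_iff)
qed

section \<open>Symmetric Z-matrices with nonnegative quadratic form\<close>

definition real_quad_form :: "nat \<Rightarrow> (nat \<Rightarrow> nat \<Rightarrow> real) \<Rightarrow> (nat \<Rightarrow> real) \<Rightarrow> real" where
  "real_quad_form n A x = (\<Sum>i<n. \<Sum>j<n. x i * A i j * x j)"

lemma real_quad_form_Suc:
  assumes "\<forall>i<Suc m. \<forall>j<Suc m. A i j = A j i"
  shows "real_quad_form (Suc m) A x =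
    real_quad_form m A x + 2 * x m * (\<Sum>j<m. A m j * x j) + x m * A m m * x m"
proof -
  have "(\<Sum>i<m. x i * A i m * x m) = x m * (\<Sum>j<m. A m j * x j)"
    by (simp add: sum_distrib_left assms algebra_simps)
  moreover have "(\<Sum>j<m. x m * A m j * x j) = x m * (\<Sum>j<m. A m j * x j)"
    by (simp add: sum_distrib_left algebra_simps)
  ultimately show ?thesis
    by (simp add: real_quad_form_def sum.distrib)
qed

lemma real_quad_form_upd_last [simp]:
  "real_quad_form m A (x(m := t)) = real_quad_form m A x"
  by (simp add: real_quad_form_def)

lemma real_quad_form_two_point:
  assumes "i < n" "j < n" "i \<noteq> j"
  shows "real_quad_form n A (\<lambda>k. if k = i then s else if k = j then t else 0) =
    s * A i i * s + s * A i j * t + t * A j i * s + t * A j j * t"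
  unfolding real_quad_form_def
  by (subst sum_sum_supported[where T = "{i, j}"]) (use assms in \<open>auto split: if_splits\<close>)

lemma real_quad_form_nonneg_zero_diag:
  assumes nonneg: "\<And>x. 0 \<le> real_quad_form n A x"
    and "A j i = A i j" "i < n" "j < n" "A i i = 0"
  shows "A i j = 0"
proof (cases "i = j")
  case False
  have "0 \<le> A j j * t\<^sup>2 + 2 * A i j * t + 0" for t
    using nonneg[of "\<lambda>k. if k = i then 1 else if k = j then t else 0"] assms False
    by (simp add: real_quad_form_two_point power2_eq_square algebra_simps)
  moreover have "A j j \<ge> 0"
    using nonneg[of "\<lambda>k. if k = i then 0 else if k = j then 1 else 0"] assms False
    by (simp add: real_quad_form_two_point)
  ultimately have "(A i j)\<^sup>2 \<le> A j j * 0"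
    by (intro quadratic_nonneg_imp_discriminant_le) auto
  then show ?thesis by simp
qed (use assms in simp)

lemma real_quad_form_schur_complement_nonneg:
  assumes sym: "\<forall>i<Suc m. \<forall>j<Suc m. A i j = A j i"
    and nonneg: "\<And>x. 0 \<le> real_quad_form (Suc m) A x"
    and pos: "A m m > 0"
  shows "0 \<le> real_quad_form m (\<lambda>i j. A i j - A i m * A m j / A m m) x"
proof -
  define B where "B = (\<Sum>j<m. A m j * x j)"
  \<comment> \<open>the last coordinate that minimises the form for the given first m coordinates\<close>
  define y where "y = x(m := - B / A m m)"
  have col: "(\<Sum>i<m. x i * A i m) = B"
    unfolding B_def using sym by (auto intro!: sum.cong)
  have row: "(\<Sum>j<m. x j * A m j) = B"
    unfolding B_def by (simp add: mult.commute)
  have "real_quad_form m (\<lambda>i j. A i j - A i m * A m j / A m m) x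
      = real_quad_form m A x - (\<Sum>i<m. x i * A i m) * B / A m m"
    unfolding real_quad_form_def B_def sum_product
    by (simp only: sum_divide_distrib sum_subtractf[symmetric])
      (intro sum.cong refl; simp add: algebra_simps)
  also have "\<dots> = real_quad_form (Suc m) A y"
    using pos by (simp add: col row y_def real_quad_form_Suc[OF sym] B_def[symmetric]
        field_simps power2_eq_square)
  finally show ?thesis using nonneg by simp
qed

lemma schur_complement_symmetric_Z_matrix:
  fixes A :: "nat \<Rightarrow> nat \<Rightarrow> real"
  assumes sym: "\<forall>i<Suc m. \<forall>j<Suc m. A i j = A j i"
    and Z: "\<forall>i<Suc m. \<forall>j<Suc m. i \<noteq> j \<longrightarrow> A i j \<le> 0" and pos: "A m m > 0"
  defines "S \<equiv> \<lambda>i j. A i j - A i m * A m j / A m m"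
  shows "\<forall>i<m. \<forall>j<m. S i j = S j i" and "\<forall>i<m. \<forall>j<m. i \<noteq> j \<longrightarrow> S i j \<le> 0"
proof -
  show "\<forall>i<m. \<forall>j<m. S i j = S j i"
    using sym by (simp add: S_def mult.commute)
  show "\<forall>i<m. \<forall>j<m. i \<noteq> j \<longrightarrow> S i j \<le> 0"
  proof (intro allI impI)
    fix i j assume "i < m" "j < m" "i \<noteq> j"
    then have "A i j \<le> 0" "A i m * A m j \<ge> 0"
      using Z by (auto intro: mult_nonpos_nonpos)
    moreover have "A i m * A m j / A m m \<ge> 0" using calculation(2) pos by simp
    ultimately show "S i j \<le> 0" by (simp add: S_def)
  qed
qed

lemma semipositive_extend_decoupled:
  fixes A :: "nat \<Rightarrow> nat \<Rightarrow> real"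
  assumes "\<forall>j<m. A m j = 0 \<and> A j m = 0" "A m m \<ge> 0"
    and "\<forall>i<m. 0 < w i" "\<forall>i<m. 0 \<le> (\<Sum>j<m. A i j * w j)"
  shows "(\<forall>i<Suc m. 0 < (w(m := 1)) i) \<and> (\<forall>i<Suc m. 0 \<le> (\<Sum>j<Suc m. A i j * (w(m := 1)) j))"
  using assms by (auto simp: less_Suc_eq)

lemma semipositive_extend_schur:
  fixes A :: "nat \<Rightarrow> nat \<Rightarrow> real"
  assumes pos: "A m m > 0" and row_nonpos: "\<forall>j<m. A m j \<le> 0" and "k < m" "A m k \<noteq> 0"
    and w_pos: "\<forall>i<m. 0 < w i" and "\<forall>i<m. 0 \<le> (\<Sum>j<m. (A i j - A i m * A m j / A m m) * w j)"
  defines "w' \<equiv> w(m := - (\<Sum>j<m. A m j * w j) / A m m)"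
  shows "(\<forall>i<Suc m. 0 < w' i) \<and> (\<forall>i<Suc m. 0 \<le> (\<Sum>j<Suc m. A i j * w' j))"
proof -
  define B where "B = (\<Sum>j<m. A m j * w j)"
  have "A m j * w j \<le> 0" if "j < m" for j
    using row_nonpos w_pos that by (simp add: mult_nonpos_nonneg less_imp_le)
  moreover have "A m k * w k < 0"
    using row_nonpos w_pos assms(3,4) by (simp add: mult_neg_pos order.not_eq_order_implies_strict)
  ultimately have "B < (\<Sum>j<m. 0)"
    unfolding B_def using assms(3) by (intro sum_strict_mono_ex1) auto
  then have neg: "B < 0" by simp
  have row_lower: "(\<Sum>j<Suc m. A i j * w' j) = (\<Sum>j<m. (A i j - A i m * A m j / A m m) * w j)"
    if "i < m" for i
    by (simp add: w'_def B_def[symmetric] algebra_simps sum_subtractf sum_distrib_left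
        sum_divide_distrib)
  have row_last: "(\<Sum>j<Suc m. A m j * w' j) = 0"
    using pos by (simp add: w'_def B_def[symmetric])
  have "0 \<le> (\<Sum>j<Suc m. A i j * w' j)" if "i < Suc m" for i
  proof (cases "i = m")
    case False
    then have "i < m" using that by simp
    then show ?thesis using row_lower assms(6) by simp
  qed (use row_last in simp)
  moreover have "0 < w' i" if "i < Suc m" for i
    using that pos neg w_pos by (auto simp: w'_def B_def[symmetric] less_Suc_eq divide_neg_pos)
  ultimately show ?thesis by blast
qed

lemma psd_Z_matrix_semipositive:
  fixes A :: "nat \<Rightarrow> nat \<Rightarrow> real"
  assumes "\<forall>i<n. \<forall>j<n. A i j = A j i" and "\<forall>i<n. \<forall>j<n. i \<noteq> j \<longrightarrow> A i j \<le> 0"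
    and "\<And>x. 0 \<le> real_quad_form n A x"
  shows "\<exists>v. (\<forall>i<n. 0 < v i) \<and> (\<forall>i<n. 0 \<le> (\<Sum>j<n. A i j * v j))"
  using assms
proof (induction n arbitrary: A)
  case 0
  show ?case by auto
next
  case (Suc m)
  note sym = Suc.prems(1) and Z = Suc.prems(2) and nonneg = Suc.prems(3)
  have nonneg_restrict: "0 \<le> real_quad_form m A x" for x
    using nonneg[of "x(m := 0)"] unfolding real_quad_form_Suc[OF sym] real_quad_form_upd_last
    by simp
  have diag: "A m m \<ge> 0"
    using nonneg[of "(\<lambda>_. 0)(m := 1)"] unfolding real_quad_form_Suc[OF sym] real_quad_form_upd_last
    by (simp add: real_quad_form_def)
  show ?case
  proof (cases "\<forall>j<m. A m j = 0")
    case True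
    then have decoupled: "\<forall>j<m. A m j = 0 \<and> A j m = 0" using sym by auto
    obtain w where "\<forall>i<m. 0 < w i" "\<forall>i<m. 0 \<le> (\<Sum>j<m. A i j * w j)"
      using Suc.IH[of A] sym Z nonneg_restrict by auto
    from semipositive_extend_decoupled[OF decoupled diag this] show ?thesis by blast
  next
    case False
    then obtain k where k: "k < m" "A m k \<noteq> 0" by blast
    have "A m m \<noteq> 0"
    proof
      assume "A m m = 0"
      then have "A m k = 0"
        using real_quad_form_nonneg_zero_diag[OF nonneg, where i = m and j = k] sym k(1) by simp
      with k(2) show False ..
    qed
    with diag have pos: "A m m > 0" by simp
    define S where "S = (\<lambda>i j. A i j - A i m * A m j / A m m)"
    have "0 \<le> real_quad_form m S x" for x
      unfolding S_def by (rule real_quad_form_schur_complement_nonneg[OF sym nonneg pos])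
    then obtain w where w: "\<forall>i<m. 0 < w i" "\<forall>i<m. 0 \<le> (\<Sum>j<m. S i j * w j)"
      using Suc.IH[of S] schur_complement_symmetric_Z_matrix[OF sym Z pos] unfolding S_def
      by blast
    have "\<forall>j<m. A m j \<le> 0" using Z by simp
    from semipositive_extend_schur[OF pos this k w(1) w(2)[unfolded S_def]]
    show ?thesis by blast
  qed
qed

section \<open>Positive semidefinite matrices\<close>

definition quad_form :: "nat \<Rightarrow> (nat \<Rightarrow> nat \<Rightarrow> complex) \<Rightarrow> (nat \<Rightarrow> complex) \<Rightarrow> complex" where
  "quad_form n N x = (\<Sum>i<n. \<Sum>j<n. cnj (x i) * N i j * x j)"

lemma psd_iff_quad_form: "psd n N \<longleftrightarrow> (\<forall>x. Im (quad_form n N x) = 0 \<and> 0 \<le> Re (quad_form n N x))"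
  by (simp add: psd_def quad_form_def Let_def)

lemma quad_form_pair:
  assumes "i < n" "j < n" "i \<noteq> j"
    and "\<And>k l. k < n \<Longrightarrow> l < n \<Longrightarrow> cnj (x k) * N k l * x l \<noteq> 0 \<Longrightarrow> k \<in> {i, j} \<and> l \<in> {i, j}"
  shows "quad_form n N x = cnj (x i) * N i i * x i + cnj (x i) * N i j * x j
    + cnj (x j) * N j i * x i + cnj (x j) * N j j * x j"
  unfolding quad_form_def using assms by (subst sum_sum_supported[where T = "{i, j}"]) auto

lemma psd_diag:
  assumes "psd n N" "i < n"
  shows "N i i = of_real (Re (N i i))" and "0 \<le> Re (N i i)"
proof -
  have "quad_form n N (\<lambda>k. if k = i then 1 else 0) = N i i"
    unfolding quad_form_def using assms(2)
    by (subst sum_sum_supported[where T = "{i}"]) (auto split: if_splits)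
  then have "Im (N i i) = 0" "0 \<le> Re (N i i)"
    using assms(1) unfolding psd_iff_quad_form by metis+
  then show "N i i = of_real (Re (N i i))" "0 \<le> Re (N i i)"
    by (simp_all add: complex_eq_iff)
qed

lemma psd_hermitian:
  assumes "psd n N" "i < n" "j < n"
  shows "N j i = cnj (N i j)"
proof (cases "i = j")
  case True
  then show ?thesis using psd_diag(1)[OF assms(1,2)] by (metis complex_cnj_complex_of_real)
next
  case False
  have diag: "Im (N i i) = 0" "Im (N j j) = 0"
    using psd_diag(1)[OF assms(1,2)] psd_diag(1)[OF assms(1,3)] by (simp_all add: complex_eq_iff)
  have "quad_form n N (\<lambda>k. if k = i then 1 else if k = j then 1 else 0)
      = N i i + N i j + N j i + N j j"
    using assms False by (subst quad_form_pair[of i n j]) (auto split: if_splits)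
  then have "Im (N i i + N i j + N j i + N j j) = 0"
    using assms(1) unfolding psd_iff_quad_form by metis
  then have im: "Im (N i j) + Im (N j i) = 0" using diag by simp
  have "quad_form n N (\<lambda>k. if k = i then 1 else if k = j then \<i> else 0)
      = N i i + \<i> * N i j - \<i> * N j i + N j j"
    using assms False
    by (subst quad_form_pair[of i n j]) (auto simp: algebra_simps split: if_splits)
  then have "Im (N i i + \<i> * N i j - \<i> * N j i + N j j) = 0"
    using assms(1) unfolding psd_iff_quad_form by metis
  then have re: "Re (N i j) - Re (N j i) = 0" using diag by simp
  show ?thesis using im re by (simp add: complex_eq_iff)
qed

lemma psd_cmod_square_le_diag:
  assumes "psd n N" "i < n" "j < n" "i \<noteq> j"
  shows "(cmod (N i j))\<^sup>2 \<le> Re (N i i) * Re (N j j)"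
proof -
  define p q c C where "p = Re (N i i)" and "q = Re (N j j)" and "c = N i j" and "C = (cmod c)\<^sup>2"
  have N: "N i i = of_real p" "N j j = of_real q" "N i j = c" "N j i = cnj c"
    using psd_diag(1) psd_hermitian assms unfolding p_def q_def c_def by blast+
  have cc: "cnj c * c = of_real C"
    unfolding C_def by (metis complex_norm_square mult.commute)
  have "0 \<le> q * t\<^sup>2 + 2 * (- C) * t + p * C" for t
  proof -
    let ?x = "\<lambda>k. if k = i then - c else if k = j then of_real t else 0"
    have "quad_form n N ?x = cnj (- c) * N i i * (- c) + cnj (- c) * N i j * of_real t
        + of_real t * N j i * (- c) + of_real t * N j j * of_real t"
      using assms by (subst quad_form_pair[of i n j]) (auto split: if_splits)
    also have "\<dots> = of_real p * (cnj c * c) - 2 * of_real t * (cnj c * c) + of_real (q * t\<^sup>2)"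
      unfolding N by (simp add: algebra_simps power2_eq_square)
    also have "\<dots> = of_real (q * t\<^sup>2 + 2 * (- C) * t + p * C)"
      unfolding cc by simp
    finally show ?thesis using assms(1) unfolding psd_iff_quad_form by (metis Re_complex_of_real)
  qed
  then have "(- C)\<^sup>2 \<le> q * (p * C)"
    by (rule quadratic_nonneg_imp_discriminant_le[rotated])
      (use psd_diag(2)[OF assms(1,3)] in \<open>simp add: q_def\<close>)
  then have "C * C \<le> C * (p * q)" by (simp add: power2_eq_square algebra_simps)
  moreover have "C \<ge> 0" by (simp add: C_def)
  moreover have "p * q \<ge> 0"
    using psd_diag(2)[OF assms(1,2)] psd_diag(2)[OF assms(1,3)] unfolding p_def q_def by simp
  ultimately have "C \<le> p * q" by (metis mult_le_cancel_left_pos order_le_less)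
  then show ?thesis by (simp add: C_def c_def p_def q_def)
qed

lemma psd_of_two_support:
  assumes "i < n" "j < n" "i \<noteq> j"
    and "\<And>k l. k < n \<Longrightarrow> l < n \<Longrightarrow> N k l \<noteq> 0 \<Longrightarrow> k \<in> {i, j} \<and> l \<in> {i, j}"
    and N: "N i i = of_real p" "N j j = of_real q" "N j i = cnj (N i j)"
    and "0 \<le> p" "0 \<le> q" "(cmod (N i j))\<^sup>2 \<le> p * q"
  shows "psd n N"
  unfolding psd_iff_quad_form
proof
  fix x :: "nat \<Rightarrow> complex"
  define z where "z = cnj (x i) * N i j * x j"
  have norm_sq: "cnj (x k) * x k = of_real ((cmod (x k))\<^sup>2)" for k
    by (metis complex_norm_square mult.commute)
  have "quad_form n N x = cnj (x i) * N i i * x i + z + cnj z + cnj (x j) * N j j * x j"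
    using assms by (subst quad_form_pair[of i n j]) (auto simp: z_def algebra_simps)
  also have "\<dots> = of_real (p * (cmod (x i))\<^sup>2 + q * (cmod (x j))\<^sup>2 + 2 * Re z)"
    unfolding N using norm_sq[of i] norm_sq[of j]
    by (simp add: complex_add_cnj algebra_simps)
  finally have form:
    "quad_form n N x = of_real (p * (cmod (x i))\<^sup>2 + q * (cmod (x j))\<^sup>2 + 2 * Re z)" .
  have "- Re z \<le> cmod z" using abs_Re_le_cmod[of z] by linarith
  also have "cmod z = cmod (N i j) * cmod (x i) * cmod (x j)" by (simp add: z_def norm_mult)
  finally have "- Re z \<le> cmod (N i j) * cmod (x i) * cmod (x j)" .
  moreover have
    "2 * cmod (N i j) * cmod (x i) * cmod (x j) \<le> p * (cmod (x i))\<^sup>2 + q * (cmod (x j))\<^sup>2"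
    using assms by (intro cross_term_le_of_square_le) auto
  ultimately show "Im (quad_form n N x) = 0 \<and> 0 \<le> Re (quad_form n N x)"
    unfolding form by simp
qed

lemma psd_sum:
  assumes "finite S" "\<And>a. a \<in> S \<Longrightarrow> psd n (N a)"
    and "\<And>i j. i < n \<Longrightarrow> j < n \<Longrightarrow> M i j = (\<Sum>a\<in>S. N a i j)"
  shows "psd n M"
  unfolding psd_iff_quad_form
proof
  fix x
  have "quad_form n M x = (\<Sum>i<n. \<Sum>j<n. \<Sum>a\<in>S. cnj (x i) * N a i j * x j)"
    unfolding quad_form_def using assms(3) by (simp add: sum_distrib_left sum_distrib_right)
  also have "\<dots> = (\<Sum>a\<in>S. quad_form n (N a) x)"
    unfolding quad_form_def by (simp only: sum.swap[where B = S])
  finally show "Im (quad_form n M x) = 0 \<and> 0 \<le> Re (quad_form n M x)"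
    using assms(2) unfolding psd_iff_quad_form by (simp add: Im_sum Re_sum sum_nonneg)
qed

section \<open>Networks with bipartite sources\<close>

lemma bipartite_source_pair:
  assumes "network n Src adj" "bipartite_sources Src adj" "a \<in> Src"
  obtains i j where "adj a = {i, j}" "i \<noteq> j" "i < n" "j < n"
proof -
  obtain i j where "adj a = {i, j}" "i \<noteq> j"
    using assms(2,3) unfolding bipartite_sources_def by (auto simp: card_2_iff)
  moreover have "adj a \<subseteq> {..<n}" using assms(1,3) unfolding network_def by auto
  ultimately show ?thesis by (intro that[of i j]) auto
qed

lemma bipartite_shared_source_unique:
  assumes "network n Src adj" "bipartite_sources Src adj" "a \<in> Src" "b \<in> Src"
    and "i \<noteq> j" "i \<in> adj a" "j \<in> adj a" "i \<in> adj b" "j \<in> adj b"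
  shows "a = b"
proof -
  have "adj c = {i, j}" if c: "c \<in> Src" "i \<in> adj c" "j \<in> adj c" for c
  proof -
    obtain k l where "adj c = {k, l}" by (rule bipartite_source_pair[OF assms(1,2) c(1)])
    with c(2,3) assms(5) show ?thesis by auto
  qed
  then have "adj a = adj b" using assms(3-9) by metis
  then show ?thesis using assms(1,3,4) unfolding network_def by (metis order_refl)
qed

lemma sum_neighbours_by_source:
  assumes net: "network n Src adj" and bip: "bipartite_sources Src adj" and "i < n"
    and zero: "\<And>t. t < n \<Longrightarrow> t \<noteq> i \<Longrightarrow> \<not> (\<exists>a\<in>Src. i \<in> adj a \<and> t \<in> adj a) \<Longrightarrow> f t = 0"
  shows "(\<Sum>a\<in>{a\<in>Src. i \<in> adj a}. \<Sum>t\<in>adj a - {i}. f t) = (\<Sum>t\<in>{..<n} - {i}. f t)"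
proof -
  let ?S = "{a\<in>Src. i \<in> adj a}"
  have fin: "finite Src" and adj: "\<And>a. a \<in> Src \<Longrightarrow> adj a \<subseteq> {..<n}"
    using net unfolding network_def by auto
  have "(\<Sum>a\<in>?S. \<Sum>t\<in>adj a - {i}. f t) = sum f (\<Union>a\<in>?S. adj a - {i})"
  proof (rule sum.UNION_disjoint[symmetric])
    show "finite ?S" using fin by simp
    show "\<forall>a\<in>?S. finite (adj a - {i})" using adj by (auto intro: finite_subset)
    show "\<forall>a\<in>?S. \<forall>b\<in>?S. a \<noteq> b \<longrightarrow> (adj a - {i}) \<inter> (adj b - {i}) = {}"
    proof (intro ballI impI)
      fix a b assume "a \<in> ?S" "b \<in> ?S" "a \<noteq> b"
      show "(adj a - {i}) \<inter> (adj b - {i}) = {}"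
      proof (rule ccontr)
        assume "(adj a - {i}) \<inter> (adj b - {i}) \<noteq> {}"
        then obtain t where "t \<in> adj a" "t \<in> adj b" "i \<noteq> t" by blast
        with \<open>a \<in> ?S\<close> \<open>b \<in> ?S\<close> have "a = b"
          using bipartite_shared_source_unique[OF net bip, of a b i t] by simp
        with \<open>a \<noteq> b\<close> show False ..
      qed
    qed
  qed
  also have "\<dots> = (\<Sum>t\<in>{..<n} - {i}. f t)"
  proof (rule sum.mono_neutral_left)
    show "(\<Union>a\<in>?S. adj a - {i}) \<subseteq> {..<n} - {i}" using adj by auto
    show "\<forall>t\<in>{..<n} - {i} - (\<Union>a\<in>?S. adj a - {i}). f t = 0"
      using zero by auto
  qed simp
  finally show ?thesis .
qed

section \<open>Comparison matrices and network decompositions\<close>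

lemma psd_comparison_matrix_two_support:
  assumes "psd n N" "i < n" "j < n" "i \<noteq> j"
    and supp: "\<And>k l. k < n \<Longrightarrow> l < n \<Longrightarrow> N k l \<noteq> 0 \<Longrightarrow> k \<in> {i, j} \<and> l \<in> {i, j}"
  shows "psd n (comparison_matrix N)"
proof (rule psd_of_two_support[OF assms(2-4)])
  show "comparison_matrix N k l \<noteq> 0 \<Longrightarrow> k \<in> {i, j} \<and> l \<in> {i, j}" if "k < n" "l < n" for k l
    using supp[OF that] unfolding comparison_matrix_def by (auto split: if_splits)
  show "comparison_matrix N i i = of_real (Re (N i i))"
    and "comparison_matrix N j j = of_real (Re (N j j))"
    using psd_diag(1)[OF assms(1)] assms(2,3) unfolding comparison_matrix_def by auto
  show "comparison_matrix N j i = cnj (comparison_matrix N i j)"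
    using psd_hermitian[OF assms(1-3)] assms(4) unfolding comparison_matrix_def by auto
  show "0 \<le> Re (N i i)" "0 \<le> Re (N j j)"
    using psd_diag(2)[OF assms(1)] assms(2,3) by auto
  show "(cmod (comparison_matrix N i j))\<^sup>2 \<le> Re (N i i) * Re (N j j)"
    using psd_cmod_square_le_diag[OF assms(1-4)] assms(4) unfolding comparison_matrix_def by simp
qed

lemma comparison_matrix_sum:
  assumes "finite S"
    and unique: "\<And>a b. i \<noteq> j \<Longrightarrow> a \<in> S \<Longrightarrow> b \<in> S \<Longrightarrow> N a i j \<noteq> 0 \<Longrightarrow> N b i j \<noteq> 0 \<Longrightarrow> a = b"
  shows "comparison_matrix (\<lambda>i j. \<Sum>a\<in>S. N a i j) i j = (\<Sum>a\<in>S. comparison_matrix (N a) i j)"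
proof (cases "i = j \<or> (\<forall>a\<in>S. N a i j = 0)")
  case True
  then show ?thesis unfolding comparison_matrix_def by auto
next
  case False
  then obtain a where a: "a \<in> S" "N a i j \<noteq> 0" and "i \<noteq> j" by blast
  have others: "N b i j = 0" if "b \<in> S" "b \<noteq> a" for b
    using unique[OF \<open>i \<noteq> j\<close> a(1) that(1) a(2)] that(2) by auto
  have "(\<Sum>b\<in>S. N b i j) = (\<Sum>b\<in>{a}. N b i j)"
    by (rule sum.mono_neutral_right) (use assms(1) a others in auto)
  moreover have "(\<Sum>b\<in>S. comparison_matrix (N b) i j) = (\<Sum>b\<in>{a}. comparison_matrix (N b) i j)"
    by (rule sum.mono_neutral_right)
      (use assms(1) a others \<open>i \<noteq> j\<close> in \<open>auto simp: comparison_matrix_def\<close>)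
  ultimately show ?thesis using \<open>i \<noteq> j\<close> unfolding comparison_matrix_def by simp
qed

lemma psd_comparison_matrix_if_decomposition:
  assumes net: "network n Src adj" and bip: "bipartite_sources Src adj"
    and "has_network_decomposition n Src adj M"
  shows "psd n (comparison_matrix M)"
proof -
  obtain Ms where local: "\<And>a. a \<in> Src \<Longrightarrow> Ms a \<in> local_matrices n (adj a)"
    and sum: "\<And>i j. i < n \<Longrightarrow> j < n \<Longrightarrow> M i j = (\<Sum>a\<in>Src. Ms a i j)"
    using assms(3) unfolding has_network_decomposition_def by blast
  have psd: "psd n (Ms a)"
    and supp: "\<And>i j. i < n \<Longrightarrow> j < n \<Longrightarrow> Ms a i j \<noteq> 0 \<Longrightarrow> i \<in> adj a \<and> j \<in> adj a"
    if "a \<in> Src" for a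
    using local[OF that] unfolding local_matrices_def by auto
  have fin: "finite Src" using net unfolding network_def by simp
  show ?thesis
  proof (rule psd_sum[OF fin])
    show "psd n (comparison_matrix (Ms a))" if a: "a \<in> Src" for a
    proof -
      obtain i j where "adj a = {i, j}" "i \<noteq> j" "i < n" "j < n"
        by (rule bipartite_source_pair[OF net bip a])
      with supp[OF a] show ?thesis
        by (intro psd_comparison_matrix_two_support[OF psd[OF a], of i j]) auto
    qed
    show "comparison_matrix M i j = (\<Sum>a\<in>Src. comparison_matrix (Ms a) i j)"
      if ij: "i < n" "j < n" for i j
    proof -
      have "comparison_matrix M i j = comparison_matrix (\<lambda>i j. \<Sum>a\<in>Src. Ms a i j) i j"
        using sum ij unfolding comparison_matrix_def by simp
      also have "\<dots> = (\<Sum>a\<in>Src. comparison_matrix (Ms a) i j)"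
      proof (rule comparison_matrix_sum[OF fin])
        fix a b assume "i \<noteq> j" "a \<in> Src" "b \<in> Src" "Ms a i j \<noteq> 0" "Ms b i j \<noteq> 0"
        moreover from this have "i \<in> adj a \<and> j \<in> adj a" "i \<in> adj b \<and> j \<in> adj b"
          using supp ij by auto
        ultimately show "a = b" using bipartite_shared_source_unique[OF net bip] by auto
      qed
      finally show ?thesis .
    qed
  qed
qed

definition restrict_with_diag ::
    "nat set \<Rightarrow> (nat \<Rightarrow> nat \<Rightarrow> complex) \<Rightarrow> (nat \<Rightarrow> real) \<Rightarrow> nat \<Rightarrow> nat \<Rightarrow> complex" where
  "restrict_with_diag P M d k l =
     (if k \<in> P \<and> l \<in> P then (if k = l then of_real (d k) else M k l) else 0)"

lemma restrict_with_diag_local: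
  assumes "i < n" "j < n" "i \<noteq> j" "M j i = cnj (M i j)"
    and "0 \<le> d i" "0 \<le> d j" "(cmod (M i j))\<^sup>2 \<le> d i * d j"
  shows "restrict_with_diag {i, j} M d \<in> local_matrices n {i, j}"
proof -
  have "psd n (restrict_with_diag {i, j} M d)"
    by (rule psd_of_two_support[OF assms(1-3), of _ "d i" "d j"])
      (use assms in \<open>auto simp: restrict_with_diag_def split: if_splits\<close>)
  then show ?thesis unfolding local_matrices_def restrict_with_diag_def by auto
qed

lemma sum_restrict_with_diag_diag:
  assumes "finite Src"
  shows "(\<Sum>a\<in>Src. restrict_with_diag (adj a) M (d a) i i) = of_real (\<Sum>a\<in>{a\<in>Src. i \<in> adj a}. d a i)"
proof -
  have "(\<Sum>a\<in>Src. restrict_with_diag (adj a) M (d a) i i)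
      = (\<Sum>a\<in>Src. if i \<in> adj a then of_real (d a i) else 0)"
    by (intro sum.cong) (auto simp: restrict_with_diag_def)
  also have "\<dots> = (\<Sum>a\<in>{a\<in>Src. i \<in> adj a}. of_real (d a i))"
    by (rule sum.inter_filter[symmetric, OF assms])
  finally show ?thesis by simp
qed

lemma sum_restrict_with_diag_offdiag:
  assumes net: "network n Src adj" and bip: "bipartite_sources Src adj"
    and "i < n" "j < n" "i \<noteq> j"
    and zero: "\<not> (\<exists>a\<in>Src. i \<in> adj a \<and> j \<in> adj a) \<Longrightarrow> M i j = 0"
  shows "(\<Sum>a\<in>Src. restrict_with_diag (adj a) M (d a) i j) = M i j"
proof (cases "\<exists>a\<in>Src. i \<in> adj a \<and> j \<in> adj a")
  case True
  then obtain a where a: "a \<in> Src" "i \<in> adj a" "j \<in> adj a" by blast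
  have fin: "finite Src" using net by (simp add: network_def)
  have "restrict_with_diag (adj b) M (d b) i j = 0" if "b \<in> Src" "b \<noteq> a" for b
    using bipartite_shared_source_unique[OF net bip that(1) a(1) \<open>i \<noteq> j\<close> _ _ a(2,3)] that(2)
    by (auto simp: restrict_with_diag_def)
  then have "(\<Sum>b\<in>Src. restrict_with_diag (adj b) M (d b) i j)
      = (\<Sum>b\<in>{a}. restrict_with_diag (adj b) M (d b) i j)"
    by (intro sum.mono_neutral_right) (use fin a in auto)
  then show ?thesis using a \<open>i \<noteq> j\<close> by (simp add: restrict_with_diag_def)
next
  case False
  then show ?thesis using zero by (auto simp: restrict_with_diag_def intro!: sum.neutral)
qed

lemma has_network_decomposition_of_budget:
  assumes net: "network n Src adj" and bip: "bipartite_sources Src adj" and psdM: "psd n M"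
    and zero: "\<And>i j. i < n \<Longrightarrow> j < n \<Longrightarrow> i \<noteq> j \<Longrightarrow> \<not> (\<exists>a\<in>Src. i \<in> adj a \<and> j \<in> adj a) \<Longrightarrow> M i j = 0"
    and g_nonneg: "\<And>i j. i < n \<Longrightarrow> j < n \<Longrightarrow> 0 \<le> g i j"
    and g_prod: "\<And>i j. i < n \<Longrightarrow> j < n \<Longrightarrow> i \<noteq> j \<Longrightarrow> (cmod (M i j))\<^sup>2 \<le> g i j * g j i"
    and budget: "\<And>i. i < n \<Longrightarrow> (\<Sum>a\<in>{a\<in>Src. i \<in> adj a}. \<Sum>t\<in>adj a - {i}. g i t) \<le> Re (M i i)"
  shows "has_network_decomposition n Src adj M"
proof -
  define S where "S i = {a\<in>Src. i \<in> adj a}" for i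
  define r where "r i = Re (M i i) - (\<Sum>a\<in>S i. \<Sum>t\<in>adj a - {i}. g i t)" for i
  define D where "D a k = (\<Sum>t\<in>adj a - {k}. g k t) + r k / card (S k)" for a k
  have fin: "finite Src" using net by (simp add: network_def)
  have card_pos: "0 < card (S i)" if "i < n" for i
    using net that fin unfolding network_def S_def by (auto simp: card_gt_0_iff)
  have r_nonneg: "0 \<le> r i" if "i < n" for i
    using budget[OF that] unfolding r_def S_def by simp
  have local: "restrict_with_diag (adj a) M (D a) \<in> local_matrices n (adj a)" if a: "a \<in> Src" for a
  proof -
    obtain i j where ij: "adj a = {i, j}" "i \<noteq> j" "i < n" "j < n"
      by (rule bipartite_source_pair[OF net bip a])
    have "adj a - {i} = {j}" "adj a - {j} = {i}" using ij by auto
    then have "D a i = g i j + r i / card (S i)" "D a j = g j i + r j / card (S j)"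
      by (simp_all add: D_def)
    then have D: "g i j \<le> D a i" "g j i \<le> D a j"
      using r_nonneg ij(3,4) by auto
    have g: "0 \<le> g i j" "0 \<le> g j i" using g_nonneg ij(3,4) by auto
    have "(cmod (M i j))\<^sup>2 \<le> D a i * D a j"
      using g_prod[OF ij(3,4,2)] mult_mono[OF D order_trans[OF g(1) D(1)] g(2)] by simp
    then show ?thesis
      unfolding ij(1)
      by (intro restrict_with_diag_local psd_hermitian[OF psdM]) (use ij D g in auto)
  qed
  have diag: "(\<Sum>a\<in>S i. D a i) = Re (M i i)" if "i < n" for i
    using card_pos[OF that] by (simp add: D_def sum.distrib r_def)
  show ?thesis
    unfolding has_network_decomposition_def
  proof (intro exI conjI ballI allI impI)
    show "restrict_with_diag (adj a) M (D a) \<in> local_matrices n (adj a)" if "a \<in> Src" for a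
      using local[OF that] .
    show "M i j = (\<Sum>a\<in>Src. restrict_with_diag (adj a) M (D a) i j)" if "i < n" "j < n" for i j
    proof (cases "i = j")
      case True
      have "(\<Sum>a\<in>Src. restrict_with_diag (adj a) M (D a) i i) = of_real (\<Sum>a\<in>S i. D a i)"
        unfolding S_def by (rule sum_restrict_with_diag_diag[OF fin])
      also have "\<dots> = M i i"
        using diag[OF that(1)] psd_diag(1)[OF psdM that(1)] by simp
      finally show ?thesis using True by simp
    next
      case False
      then show ?thesis
        using sum_restrict_with_diag_offdiag[OF net bip that False] zero[OF that False] by simp
    qed
  qed
qed

lemma psd_comparison_matrix_scaled_dominant:
  assumes psdM: "psd n M" and psdC: "psd n (comparison_matrix M)"
  obtains v where "\<And>i. i < n \<Longrightarrow> 0 < v i"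
    and "\<And>i. i < n \<Longrightarrow> (\<Sum>t\<in>{..<n} - {i}. cmod (M i t) * v t) \<le> Re (M i i) * v i"
proof -
  define A where "A i j = Re (comparison_matrix M i j)" for i j
  have A_diag: "A i i = Re (M i i)" for i
    by (simp add: A_def comparison_matrix_def)
  have A_offdiag: "A i j = - cmod (M i j)" if "i \<noteq> j" for i j
    using that by (simp add: A_def comparison_matrix_def)
  have "\<forall>i<n. \<forall>j<n. A i j = A j i"
    using psd_hermitian[OF psdM] by (metis A_offdiag complex_mod_cnj)
  moreover have "\<forall>i<n. \<forall>j<n. i \<noteq> j \<longrightarrow> A i j \<le> 0"
    by (simp add: A_offdiag)
  moreover have "0 \<le> real_quad_form n A x" for x
  proof -
    have "comparison_matrix M i j = of_real (A i j)" if "i < n" for i j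
      using psd_diag(1)[OF psdM that] by (auto simp: A_def comparison_matrix_def)
    then have "quad_form n (comparison_matrix M) (\<lambda>k. of_real (x k))
        = of_real (real_quad_form n A x)"
      by (simp add: quad_form_def real_quad_form_def)
    then show ?thesis using psdC unfolding psd_iff_quad_form by (metis Re_complex_of_real)
  qed
  ultimately obtain v where v: "\<forall>i<n. 0 < v i" "\<forall>i<n. 0 \<le> (\<Sum>j<n. A i j * v j)"
    using psd_Z_matrix_semipositive by blast
  have "(\<Sum>j<n. A i j * v j) = Re (M i i) * v i - (\<Sum>t\<in>{..<n} - {i}. cmod (M i t) * v t)"
    if "i < n" for i
    using that by (simp add: sum.remove[of "{..<n}" i] A_diag A_offdiag sum_negf)
  with v show ?thesis using that by auto
qed

lemma has_network_decomposition_of_scaled_dominant: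
  assumes net: "network n Src adj" and bip: "bipartite_sources Src adj" and psdM: "psd n M"
    and zero: "\<And>i j. i < n \<Longrightarrow> j < n \<Longrightarrow> i \<noteq> j \<Longrightarrow> \<not> (\<exists>a\<in>Src. i \<in> adj a \<and> j \<in> adj a) \<Longrightarrow> M i j = 0"
    and v_pos: "\<And>i. i < n \<Longrightarrow> 0 < v i"
    and dominant: "\<And>i. i < n \<Longrightarrow> (\<Sum>t\<in>{..<n} - {i}. cmod (M i t) * v t) \<le> Re (M i i) * v i"
  shows "has_network_decomposition n Src adj M"
proof (rule has_network_decomposition_of_budget[OF net bip psdM zero,
      where g = "\<lambda>i t. cmod (M i t) * v t / v i"])
  show "0 \<le> cmod (M i j) * v j / v i" if "i < n" "j < n" for i j
    using v_pos[OF that(1)] v_pos[OF that(2)] by simp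
  show "(cmod (M i j))\<^sup>2 \<le> cmod (M i j) * v j / v i * (cmod (M j i) * v i / v j)"
    if "i < n" "j < n" "i \<noteq> j" for i j
    using v_pos[OF that(1)] v_pos[OF that(2)] psd_hermitian[OF psdM that(1,2)]
    by (simp add: power2_eq_square)
  show "(\<Sum>a\<in>{a\<in>Src. i \<in> adj a}. \<Sum>t\<in>adj a - {i}. cmod (M i t) * v t / v i) \<le> Re (M i i)"
    if "i < n" for i
  proof -
    have "(\<Sum>a\<in>{a\<in>Src. i \<in> adj a}. \<Sum>t\<in>adj a - {i}. cmod (M i t) * v t / v i)
        = (\<Sum>t\<in>{..<n} - {i}. cmod (M i t) * v t) / v i"
      by (subst sum_neighbours_by_source[OF net bip that])
        (use zero[OF that] in \<open>simp_all add: sum_divide_distrib\<close>)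
    also have "\<dots> \<le> Re (M i i)"
      using dominant[OF that] v_pos[OF that] by (simp add: divide_le_eq)
    finally show ?thesis .
  qed
qed

theorem lemma5:
  fixes n :: nat and Src :: "'s set" and adj :: "'s \<Rightarrow> nat set"
    and M :: "nat \<Rightarrow> nat \<Rightarrow> complex"
  assumes "network n Src adj"
    and "bipartite_sources Src adj"
    and "psd n M"
    and "\<And>i j. i < n \<Longrightarrow> j < n \<Longrightarrow> i \<noteq> j \<Longrightarrow> \<not> (\<exists>a\<in>Src. i \<in> adj a \<and> j \<in> adj a) \<Longrightarrow> M i j = 0"
  shows "has_network_decomposition n Src adj M \<longleftrightarrow> psd n (comparison_matrix M)"
proof
  assume "has_network_decomposition n Src adj M"
  then show "psd n (comparison_matrix M)"
    using psd_comparison_matrix_if_decomposition assms(1,2) by blast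
next
  assume "psd n (comparison_matrix M)"
  then obtain v where "\<And>i. i < n \<Longrightarrow> 0 < v i"
    and "\<And>i. i < n \<Longrightarrow> (\<Sum>t\<in>{..<n} - {i}. cmod (M i t) * v t) \<le> Re (M i i) * v i"
    using psd_comparison_matrix_scaled_dominant assms(3) by blast
  then show "has_network_decomposition n Src adj M"
    using has_network_decomposition_of_scaled_dominant[OF assms] by blast
qed

end
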